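(* Let $P$ be a 2-dimensional plane or a sphere in $\mathbb R^3$ with its usual induced surface measure $dS$, let $\xi\in\mathbb R^3$, and let $\epsilon=\frac1{10}$. Then there exists $C$ independent of $\xi$ and $P$ such that $$\int_P\frac{1}{|\xi-\eta|^{2-\epsilon}\,|\tfrac{\xi}{2}-\eta|\,|\eta|^{2-\epsilon}}\,dS(\eta)\le\frac{C}{|\xi|^{3-2\epsilon}}.$$ *)

theory Defs
  imports "HOL-Analysis.Analysis"
begin

text \<open>Plane through a spanned by the orthonormal vectors u, v:
  eta = a + s u + t v, with dS = ds dt.\<close>
definition plane_integral :: "(real^3 \<Rightarrow> real) \<Rightarrow> real^3 \<Rightarrow> real^3 \<Rightarrow> real^3 \<Rightarrow> ennreal" where
  "plane_integral f a u v =
     (\<integral>\<^sup>+ p. ennreal (f (a + fst p *\<^sub>R u + snd p *\<^sub>R v)) \<partial>(lborel :: (real \<times> real) measure))"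

definition orthonormal_pair :: "real^3 \<Rightarrow> real^3 \<Rightarrow> bool" where
  "orthonormal_pair u v \<longleftrightarrow> norm u = 1 \<and> norm v = 1 \<and> u \<bullet> v = 0"

definition sph :: "real \<Rightarrow> real \<Rightarrow> real^3" where
  "sph \<theta> \<phi> = vector [sin \<theta> * cos \<phi>, sin \<theta> * sin \<phi>, cos \<theta>]"

definition sphere_integral :: "(real^3 \<Rightarrow> real) \<Rightarrow> real^3 \<Rightarrow> real \<Rightarrow> ennreal" where
  "sphere_integral f c r =
     (\<integral>\<^sup>+ p \<in> {0..pi} \<times> {0..2*pi}.
        ennreal (f (c + r *\<^sub>R sph (fst p) (snd p)) * r\<^sup>2 * sin (fst p)) \<partial>(lborel :: (real \<times> real) measure))"

definition eps0 :: real where "eps0 = 1/10"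

definition kernel :: "real^3 \<Rightarrow> real^3 \<Rightarrow> real" where
  "kernel \<xi> \<eta> = 1 / (norm (\<xi> - \<eta>) powr (2 - eps0) * norm ((1/2) *\<^sub>R \<xi> - \<eta>) * norm \<eta> powr (2 - eps0))"

end

theory Submission
  imports Defs
begin

text \<open>
  The surface measure of a plane or a sphere is upper 2-regular: every ball of radius rho in
  R^3 has measure at most K rho^2, with K independent of the surface. For any such measure a
  dyadic decomposition bounds the integral of dist(p, eta)^(-a) over a ball of radius R by
  C R^(2-a) when a < 2, and over the complement of that ball by C R^(2-b) when b > 2.
  Put X = |xi|/4. At most one of the distances from eta to 0, xi and xi/2 is below X, and once
  |eta| >= 8X all three are comparable to |eta|. Hence the kernel is dominated by five terms of
  these two kinds, each of which integrates to a constant times X^(1-2a), where a = 2 - eps0.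
\<close>

section \<open>Upper regular measures\<close>

definition upper_regular :: "real \<Rightarrow> real \<Rightarrow> 'a::metric_space measure \<Rightarrow> bool" where
  "upper_regular s K N \<longleftrightarrow>
     sets N = sets borel \<and> (\<forall>p r. 0 < r \<longrightarrow> emeasure N (ball p r) \<le> ennreal (K * r powr s))"

lemma upper_regular_emeasure_ball:
  "upper_regular s K N \<Longrightarrow> 0 < r \<Longrightarrow> emeasure N (ball p r) \<le> ennreal (K * r powr s)"
  by (simp add: upper_regular_def)

lemma upper_regular_mono:
  assumes "upper_regular s K N" "K \<le> K'"
  shows "upper_regular s K' N"
  using assms unfolding upper_regular_def
  by (meson ennreal_leI mult_right_mono order_trans powr_ge_zero)

lemma suminf_ennreal_geometric:
  fixes A q :: real
  assumes "0 \<le> A" "0 \<le> q" "q < 1"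
  shows "(\<Sum>k. ennreal (A * q^k)) = ennreal (A / (1 - q))"
proof -
  have "(\<Sum>k. A * q^k) = A / (1 - q)"
    using assms by (simp add: suminf_mult suminf_geometric summable_geometric)
  moreover have "summable (\<lambda>k. A * q^k)"
    using assms by (intro summable_mult summable_geometric) simp
  ultimately show ?thesis
    using assms by (subst suminf_ennreal2) auto
qed

lemma nn_integral_le_dyadic_balls:
  assumes N: "upper_regular s K N" and K: "0 \<le> K"
    and cover: "\<And>y. y \<in> space N \<Longrightarrow> f y \<le> (\<Sum>k. ennreal (c k) * indicator (ball p (r k)) y)"
    and c: "\<And>k. 0 \<le> c k" and r: "\<And>k. 0 < r k"
    and geom: "\<And>k. c k * r k powr s = A * q^k" and q: "0 \<le> q" "q < 1"
  shows "(\<integral>\<^sup>+y. f y \<partial>N) \<le> ennreal (K * A / (1 - q))"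
proof -
  have [measurable_cong]: "sets N = sets borel"
    using N by (simp add: upper_regular_def)
  have [measurable]: "ball p (r k) \<in> sets N" for k
    using N by (simp add: upper_regular_def)
  have A: "0 \<le> A"
    using geom[of 0] c[of 0] by (metis mult_nonneg_nonneg powr_ge_zero power_0 mult_1_right)
  have "(\<integral>\<^sup>+y. f y \<partial>N) \<le> (\<integral>\<^sup>+y. (\<Sum>k. ennreal (c k) * indicator (ball p (r k)) y) \<partial>N)"
    using cover by (rule nn_integral_mono)
  also have "\<dots> = (\<Sum>k. \<integral>\<^sup>+y. ennreal (c k) * indicator (ball p (r k)) y \<partial>N)"
    by (rule nn_integral_suminf) measurable
  also have "\<dots> = (\<Sum>k. ennreal (c k) * emeasure N (ball p (r k)))"
    by (simp add: nn_integral_cmult_indicator)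
  also have "\<dots> \<le> (\<Sum>k. ennreal (c k) * ennreal (K * r k powr s))"
    using r by (intro suminf_le mult_left_mono summableI upper_regular_emeasure_ball[OF N]) auto
  also have "\<dots> = (\<Sum>k. ennreal (K * A * q^k))"
    using c by (simp add: ennreal_mult'[symmetric] mult.left_commute[of "c _"] geom mult.assoc)
  also have "\<dots> = ennreal (K * A / (1 - q))"
    using K A q by (intro suminf_ennreal_geometric mult_nonneg_nonneg)
  finally show ?thesis .
qed

lemma nn_integral_dist_powr_ball_le:
  fixes N :: "'a::metric_space measure"
  assumes N: "upper_regular s K N" and K: "0 \<le> K" and a: "0 \<le> a" "a < s" and R: "0 < R"
  shows "(\<integral>\<^sup>+y. ennreal (if dist p y < R then dist p y powr (-a) else 0) \<partial>N)
           \<le> ennreal (K * (2 powr a * R powr (s - a)) / (1 - 2 powr (a - s)))"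
proof (rule nn_integral_le_dyadic_balls[OF N K])
  fix y
  show "ennreal (if dist p y < R then dist p y powr (-a) else 0)
          \<le> (\<Sum>k. ennreal ((R / 2^Suc k) powr (-a)) * indicator (ball p (R / 2^k)) y)"
  proof (cases "0 < dist p y \<and> dist p y < R")
    case True
    obtain n where "R / dist p y < 2^n"
      using real_arch_pow[of 2] by fastforce
    then have "R / 2^n \<le> dist p y"
      using True by (simp add: field_simps)
    then obtain k where k: "\<not> R / 2^k \<le> dist p y" "R / 2^Suc k \<le> dist p y"
      using ex_least_nat_less[of "\<lambda>i. R / 2^i \<le> dist p y"] True by auto
    have "dist p y powr (-a) \<le> (R / 2^Suc k) powr (-a)"
      using k(2) R a by (intro powr_mono2') auto
    then have "ennreal (if dist p y < R then dist p y powr (-a) else 0)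
          \<le> ennreal ((R / 2^Suc k) powr (-a)) * indicator (ball p (R / 2^k)) y"
      using True k(1) by (auto intro: ennreal_leI)
    also have "\<dots> \<le> (\<Sum>k. ennreal ((R / 2^Suc k) powr (-a)) * indicator (ball p (R / 2^k)) y)"
      using sum_le_suminf[OF summableI, of "{k}"] by simp
    finally show ?thesis .
  qed (auto simp: dist_commute)
next
  show "(R / 2^Suc k) powr (-a) * (R / 2^k) powr s = (2 powr a * R powr (s - a)) * (2 powr (a - s))^k" for k
    using R by (simp add: powr_divide powr_mult powr_realpow[symmetric] powr_powr powr_power
        powr_add powr_diff powr_minus field_simps)
  show "2 powr (a - s) < 1"
    using a by (intro powr_less_one) auto
qed (use R in auto)

lemma nn_integral_dist_powr_outside_ball_le:
  fixes N :: "'a::metric_space measure"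
  assumes N: "upper_regular s K N" and K: "0 \<le> K" and s: "0 \<le> s" and b: "s < b" and R: "0 < R"
  shows "(\<integral>\<^sup>+y. ennreal (if R \<le> dist p y then dist p y powr (-b) else 0) \<partial>N)
           \<le> ennreal (K * (2 powr s * R powr (s - b)) / (1 - 2 powr (s - b)))"
proof (rule nn_integral_le_dyadic_balls[OF N K])
  fix y
  show "ennreal (if R \<le> dist p y then dist p y powr (-b) else 0)
          \<le> (\<Sum>k. ennreal ((R * 2^k) powr (-b)) * indicator (ball p (R * 2^Suc k)) y)"
  proof (cases "R \<le> dist p y")
    case True
    obtain n where "dist p y / R < 2^n"
      using real_arch_pow[of 2] by fastforce
    then have "dist p y < R * 2^n"
      using R by (simp add: field_simps)
    then obtain k where k: "\<not> dist p y < R * 2^k" "dist p y < R * 2^Suc k"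
      using ex_least_nat_less[of "\<lambda>i. dist p y < R * 2^i"] True by auto
    have "dist p y powr (-b) \<le> (R * 2^k) powr (-b)"
      using k(1) R s b by (intro powr_mono2') auto
    then have "ennreal (if R \<le> dist p y then dist p y powr (-b) else 0)
          \<le> ennreal ((R * 2^k) powr (-b)) * indicator (ball p (R * 2^Suc k)) y"
      using True k(2) by (auto simp: dist_commute intro: ennreal_leI)
    also have "\<dots> \<le> (\<Sum>k. ennreal ((R * 2^k) powr (-b)) * indicator (ball p (R * 2^Suc k)) y)"
      using sum_le_suminf[OF summableI, of "{k}"] by simp
    finally show ?thesis .
  qed auto
next
  show "(R * 2^k) powr (-b) * (R * 2^Suc k) powr s = (2 powr s * R powr (s - b)) * (2 powr (s - b))^k" for k
    using R by (simp add: powr_mult powr_realpow[symmetric] powr_powr powr_power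
        powr_add powr_diff powr_minus field_simps)
  show "2 powr (s - b) < 1"
    using b by (intro powr_less_one) auto
qed (use R in auto)

lemma nn_integral_add_le:
  fixes f g :: "'a \<Rightarrow> real"
  assumes [measurable]: "f \<in> borel_measurable N" "g \<in> borel_measurable N"
    and "\<And>y. 0 \<le> f y" "\<And>y. 0 \<le> g y" "0 \<le> a" "0 \<le> b"
    and "(\<integral>\<^sup>+y. ennreal (f y) \<partial>N) \<le> ennreal a" "(\<integral>\<^sup>+y. ennreal (g y) \<partial>N) \<le> ennreal b"
  shows "(\<integral>\<^sup>+y. ennreal (f y + g y) \<partial>N) \<le> ennreal (a + b)"
proof -
  have "(\<integral>\<^sup>+y. ennreal (f y + g y) \<partial>N) = (\<integral>\<^sup>+y. ennreal (f y) \<partial>N) + (\<integral>\<^sup>+y. ennreal (g y) \<partial>N)"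
    using assms by (simp add: ennreal_plus nn_integral_add)
  also have "\<dots> \<le> ennreal (a + b)"
    using assms by (simp add: ennreal_plus add_mono)
  finally show ?thesis .
qed

lemma nn_integral_cmult_le:
  fixes f :: "'a \<Rightarrow> real"
  assumes "f \<in> borel_measurable N" "0 \<le> c" "(\<integral>\<^sup>+y. ennreal (f y) \<partial>N) \<le> ennreal b"
  shows "(\<integral>\<^sup>+y. ennreal (c * f y) \<partial>N) \<le> ennreal (c * b)"
proof -
  have "(\<integral>\<^sup>+y. ennreal (c * f y) \<partial>N) = ennreal c * (\<integral>\<^sup>+y. ennreal (f y) \<partial>N)"
    using assms by (simp add: ennreal_mult' nn_integral_cmult)
  also have "\<dots> \<le> ennreal (c * b)"
    using assms by (cases "0 \<le> b") (auto simp: ennreal_mult' ennreal_neg intro: mult_left_mono)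
  finally show ?thesis .
qed

section \<open>The kernel\<close>

lemma divide_powr_mono:
  fixes A B M P Q R a :: real
  assumes "0 < P" "P \<le> B" "0 < Q" "Q \<le> M" "0 < R" "R \<le> A" "0 \<le> a"
  shows "1 / (B powr a * M * A powr a) \<le> 1 / (P powr a * Q * R powr a)"
  using assms by (intro divide_left_mono mult_mono powr_mono2 mult_pos_pos) auto

text \<open>\<open>A\<close>, \<open>B\<close>, \<open>M\<close> stand for the distances from \<open>\<eta>\<close> to \<open>0\<close>, \<open>\<xi>\<close> and \<open>\<xi>/2\<close>, where
  \<open>|\<xi>| = 4 X\<close>; the hypotheses are the triangle inequalities relating them.\<close>

lemma inverse_distance_product_le:
  fixes A B M X a :: real
  assumes X: "0 < X" and a: "0 \<le> a" and nonneg: "0 \<le> A" "0 \<le> B" "0 \<le> M"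
    and tri: "4*X \<le> A + B" "2*X \<le> A + M" "2*X \<le> B + M" "A \<le> B + 4*X" "A \<le> M + 2*X"
  shows "1 / (B powr a * M * A powr a)
    \<le> X powr -(a+1) * (if A < X then A powr -a else 0)
     + X powr -(a+1) * (if B < X then B powr -a else 0)
     + X powr -(2*a) * (if M < X then M powr -1 else 0)
     + X powr -(2*a+1) * (if A < 8*X then 1 else 0)
     + 2 powr (a+1) * (if 8*X \<le> A then A powr -(2*a+1) else 0)"
    (is "_ \<le> ?T1 + ?T2 + ?T3 + ?T4 + ?T5")
proof -
  have terms_nonneg: "0 \<le> ?T1" "0 \<le> ?T2" "0 \<le> ?T3" "0 \<le> ?T4" "0 \<le> ?T5"
    by auto
  consider "A = 0 \<or> B = 0 \<or> M = 0" | "0 < A" "0 < B" "0 < M"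
    using nonneg by fastforce
  then show ?thesis
  proof cases
    case 1
    then have "1 / (B powr a * M * A powr a) = 0"
      by auto
    with terms_nonneg show ?thesis
      by linarith
  next
    case pos: 2
    consider "A < X" | "B < X" | "M < X" | "X \<le> A" "X \<le> B" "X \<le> M" "A < 8*X" | "8*X \<le> A"
      by linarith
    then show ?thesis
    proof cases
      case 1
      then have "1 / (B powr a * M * A powr a) \<le> 1 / (X powr a * X * A powr a)"
        using X a pos tri by (intro divide_powr_mono) auto
      also have "\<dots> = ?T1"
        unfolding powr_minus using X pos 1 by (simp add: powr_add divide_inverse)
      finally show ?thesis
        using terms_nonneg by linarith
    next
      case 2
      have "1 / (B powr a * M * A powr a) = 1 / (A powr a * M * B powr a)"
        by (simp add: mult_ac)
      also have "\<dots> \<le> 1 / (X powr a * X * B powr a)"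
        using 2 X a pos tri by (intro divide_powr_mono) auto
      also have "\<dots> = ?T2"
        unfolding powr_minus using X pos 2 by (simp add: powr_add divide_inverse)
      finally show ?thesis
        using terms_nonneg by linarith
    next
      case 3
      then have "1 / (B powr a * M * A powr a) \<le> 1 / (X powr a * M * X powr a)"
        using X a pos tri by (intro divide_powr_mono) auto
      also have "\<dots> = ?T3"
        unfolding powr_minus mult_2 powr_add using X pos 3 by (simp add: field_simps)
      finally show ?thesis
        using terms_nonneg by linarith
    next
      case 4
      then have "1 / (B powr a * M * A powr a) \<le> 1 / (X powr a * X * X powr a)"
        using X a pos by (intro divide_powr_mono) auto
      also have "\<dots> = ?T4"
        unfolding powr_minus mult_2 powr_add using X 4 by (simp add: field_simps)
      finally show ?thesis
        using terms_nonneg by linarith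
    next
      case 5
      then have "1 / (B powr a * M * A powr a) \<le> 1 / ((A/2) powr a * (A/2) * A powr a)"
        using X a pos tri by (intro divide_powr_mono) auto
      also have "\<dots> = ?T5"
        unfolding powr_minus mult_2 powr_add using pos 5 by (simp add: field_simps powr_divide)
      finally show ?thesis
        using terms_nonneg by linarith
    qed
  qed
qed

lemma nn_integral_dist_less_le:
  assumes N: "upper_regular s K N" and R: "0 < R"
  shows "(\<integral>\<^sup>+y. ennreal (if dist p y < R then 1 else 0) \<partial>N) \<le> ennreal (K * R powr s)"
proof -
  have "(\<integral>\<^sup>+y. ennreal (if dist p y < R then 1 else 0) \<partial>N) = (\<integral>\<^sup>+y. indicator (ball p R) y \<partial>N)"
    by (rule nn_integral_cong) (simp add: indicator_def)
  also have "\<dots> = emeasure N (ball p R)"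
    using N by (intro nn_integral_indicator) (simp add: upper_regular_def)
  also have "\<dots> \<le> ennreal (K * R powr s)"
    using N R by (rule upper_regular_emeasure_ball)
  finally show ?thesis .
qed

text \<open>The five terms cover the regions near \<open>p\<close>, near \<open>q\<close>, near the midpoint \<open>m\<close>, the rest
  of the ball of radius \<open>8 X\<close> about \<open>p\<close>, and its exterior; here \<open>dist p q = 4 X\<close>.\<close>

definition kernel_majorant :: "real \<Rightarrow> real \<Rightarrow> 'a::metric_space \<Rightarrow> 'a \<Rightarrow> 'a \<Rightarrow> 'a \<Rightarrow> real" where
  "kernel_majorant a X p q m \<eta> =
       X powr -(a+1) * (if dist p \<eta> < X then dist p \<eta> powr -a else 0)
     + X powr -(a+1) * (if dist q \<eta> < X then dist q \<eta> powr -a else 0)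
     + X powr -(2*a) * (if dist m \<eta> < X then dist m \<eta> powr -1 else 0)
     + X powr -(2*a+1) * (if dist p \<eta> < 8*X then 1 else 0)
     + 2 powr (a+1) * (if 8*X \<le> dist p \<eta> then dist p \<eta> powr -(2*a+1) else 0)"

lemma kernel_le_majorant:
  fixes \<xi> \<eta> :: "real^3"
  assumes "\<xi> \<noteq> 0"
  shows "kernel \<xi> \<eta> \<le> kernel_majorant (2 - eps0) (norm \<xi> / 4) 0 \<xi> ((1/2) *\<^sub>R \<xi>) \<eta>"
proof -
  define a X half where "a = 2 - eps0" and "X = norm \<xi> / 4" and "half = (1/2) *\<^sub>R \<xi>"
  have kernel: "kernel \<xi> \<eta> = 1 / (dist \<xi> \<eta> powr a * dist half \<eta> * dist 0 \<eta> powr a)"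
    by (simp add: kernel_def dist_norm a_def half_def)
  have "\<xi> - half = half"
    by (simp add: half_def vec_eq_iff)
  moreover have "norm half = 2*X"
    by (simp add: half_def X_def)
  ultimately have "dist 0 \<xi> = 4*X" "dist 0 half = 2*X" "dist \<xi> half = 2*X"
    by (simp_all add: dist_norm X_def)
  then show ?thesis
    unfolding kernel kernel_majorant_def a_def[symmetric] X_def[symmetric] half_def[symmetric]
    using assms dist_triangle[of 0 \<xi> \<eta>] dist_triangle[of 0 half \<eta>] dist_triangle[of \<xi> half \<eta>]
      dist_triangle[of 0 \<eta> \<xi>] dist_triangle[of 0 \<eta> half]
    by (intro inverse_distance_product_le) (auto simp: dist_commute a_def eps0_def X_def)
qed

lemma nn_integral_kernel_majorant_le:
  fixes N :: "'a::{metric_space, second_countable_topology} measure"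
  assumes N: "upper_regular 2 K N" and K: "0 \<le> K" and X: "0 < X" and a: "1/2 < a" "a < 2"
  shows "(\<integral>\<^sup>+\<eta>. ennreal (kernel_majorant a X p q m \<eta>) \<partial>N)
    \<le> ennreal (K * (2 * (2 powr a / (1 - 2 powr (a - 2))) + 68
         + 2 powr (a+1) * 4 * 8 powr (1 - 2*a) / (1 - 2 powr (1 - 2*a))) * X powr (1 - 2*a))"
proof -
  have [measurable_cong]: "sets N = sets borel"
    using N by (simp add: upper_regular_def)
  have den: "0 \<le> 1 - 2 powr (a - 2)" "0 \<le> 1 - (2::real) powr (1 - 2)" "0 \<le> 1 - 2 powr (2 - (2*a+1))"
    using a by (auto intro!: less_imp_le powr_less_one)
  have "(\<integral>\<^sup>+\<eta>. ennreal (kernel_majorant a X p q m \<eta>) \<partial>N)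
    \<le> ennreal (X powr -(a+1) * (K * (2 powr a * X powr (2 - a)) / (1 - 2 powr (a - 2)))
     + X powr -(a+1) * (K * (2 powr a * X powr (2 - a)) / (1 - 2 powr (a - 2)))
     + X powr -(2*a) * (K * (2 powr 1 * X powr (2 - 1)) / (1 - 2 powr (1 - 2)))
     + X powr -(2*a+1) * (K * (8*X) powr 2)
     + 2 powr (a+1) * (K * (2 powr 2 * (8*X) powr (2 - (2*a+1))) / (1 - 2 powr (2 - (2*a+1)))))"
  proof -
    have near_p: "(\<integral>\<^sup>+\<eta>. ennreal (X powr -(a+1) * (if dist p \<eta> < X then dist p \<eta> powr -a else 0)) \<partial>N)
        \<le> ennreal (X powr -(a+1) * (K * (2 powr a * X powr (2 - a)) / (1 - 2 powr (a - 2))))"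
      using a X by (intro nn_integral_cmult_le nn_integral_dist_powr_ball_le[OF N K]) auto
    have near_q: "(\<integral>\<^sup>+\<eta>. ennreal (X powr -(a+1) * (if dist q \<eta> < X then dist q \<eta> powr -a else 0)) \<partial>N)
        \<le> ennreal (X powr -(a+1) * (K * (2 powr a * X powr (2 - a)) / (1 - 2 powr (a - 2))))"
      using a X by (intro nn_integral_cmult_le nn_integral_dist_powr_ball_le[OF N K]) auto
    have near_m: "(\<integral>\<^sup>+\<eta>. ennreal (X powr -(2*a) * (if dist m \<eta> < X then dist m \<eta> powr -1 else 0)) \<partial>N)
        \<le> ennreal (X powr -(2*a) * (K * (2 powr 1 * X powr (2 - 1)) / (1 - 2 powr (1 - 2))))"
      using X by (intro nn_integral_cmult_le nn_integral_dist_powr_ball_le[OF N K]) auto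
    have ball_p: "(\<integral>\<^sup>+\<eta>. ennreal (X powr -(2*a+1) * (if dist p \<eta> < 8*X then 1 else 0)) \<partial>N)
        \<le> ennreal (X powr -(2*a+1) * (K * (8*X) powr 2))"
      using X by (intro nn_integral_cmult_le nn_integral_dist_less_le[OF N]) auto
    have far_p: "(\<integral>\<^sup>+\<eta>. ennreal (2 powr (a+1) * (if 8*X \<le> dist p \<eta> then dist p \<eta> powr -(2*a+1) else 0)) \<partial>N)
        \<le> ennreal (2 powr (a+1) * (K * (2 powr 2 * (8*X) powr (2 - (2*a+1))) / (1 - 2 powr (2 - (2*a+1)))))"
      using a X by (intro nn_integral_cmult_le nn_integral_dist_powr_outside_ball_le[OF N K]) auto
    show ?thesis
      unfolding kernel_majorant_def using X K den
      by (intro nn_integral_add_le near_p near_q near_m ball_p far_p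
          add_nonneg_nonneg mult_nonneg_nonneg divide_nonneg_nonneg) auto
  qed
  also have "\<dots> = ennreal (K * (2 * (2 powr a / (1 - 2 powr (a - 2))) + 68
         + 2 powr (a+1) * 4 * 8 powr (1 - 2*a) / (1 - 2 powr (1 - 2*a))) * X powr (1 - 2*a))"
  proof -
    have t1: "X powr -(a+1) * (K * (2 powr a * X powr (2 - a)) / (1 - 2 powr (a - 2)))
        = K * (2 powr a / (1 - 2 powr (a - 2))) * X powr (1 - 2*a)"
      using X by (simp add: powr_add[symmetric] field_simps)
    have t2: "X powr -(2*a) * (K * (2 powr 1 * X powr (2 - 1)) / (1 - 2 powr (1 - 2))) = K * 4 * X powr (1 - 2*a)"
      using X by (simp add: powr_add[symmetric] powr_mult_base field_simps)
    have t3: "X powr -(2*a+1) * (K * (8*X) powr 2) = K * 64 * X powr (1 - 2*a)"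
      using X by (simp add: powr_add[symmetric] powr_mult_base powr_mult field_simps flip: powr_numeral)
    have t4: "2 powr (a+1) * (K * (2 powr 2 * (8*X) powr (2 - (2*a+1))) / (1 - 2 powr (2 - (2*a+1))))
        = K * (2 powr (a+1) * 4 * 8 powr (1 - 2*a) / (1 - 2 powr (1 - 2*a))) * X powr (1 - 2*a)"
      using X by (simp add: powr_mult field_simps)
    show ?thesis
      unfolding t1 t2 t3 t4 by (simp add: algebra_simps)
  qed
  finally show ?thesis .
qed

lemma kernel_integral_bound:
  "\<exists>C. \<forall>K (N :: (real^3) measure) \<xi>. upper_regular 2 K N \<longrightarrow> 0 \<le> K \<longrightarrow> \<xi> \<noteq> 0 \<longrightarrow>
     (\<integral>\<^sup>+\<eta>. ennreal (kernel \<xi> \<eta>) \<partial>N) \<le> ennreal (K * C / norm \<xi> powr (3 - 2 * eps0))"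
proof (intro exI allI impI)
  define a where "a = 2 - eps0"
  define C0 where "C0 = 2 * (2 powr a / (1 - 2 powr (a - 2))) + 68
         + 2 powr (a+1) * 4 * 8 powr (1 - 2*a) / (1 - 2 powr (1 - 2*a))"
  fix K and N :: "(real^3) measure" and \<xi> :: "real^3"
  assume N: "upper_regular 2 K N" and K: "0 \<le> K" and \<xi>: "\<xi> \<noteq> 0"
  have exponents: "1 - 2*a = -(3 - 2 * eps0)" "2*a - 1 = 3 - 2 * eps0"
    by (simp_all add: a_def)
  have "(\<integral>\<^sup>+\<eta>. ennreal (kernel \<xi> \<eta>) \<partial>N)
      \<le> (\<integral>\<^sup>+\<eta>. ennreal (kernel_majorant a (norm \<xi> / 4) 0 \<xi> ((1/2) *\<^sub>R \<xi>) \<eta>) \<partial>N)"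
    unfolding a_def using \<xi> by (intro nn_integral_mono ennreal_leI kernel_le_majorant)
  also have "\<dots> \<le> ennreal (K * C0 * (norm \<xi> / 4) powr (1 - 2*a))"
    unfolding C0_def using \<xi> by (intro nn_integral_kernel_majorant_le[OF N K]) (simp_all add: a_def eps0_def)
  also have "(norm \<xi> / 4) powr (1 - 2*a) = 4 powr (2*a - 1) / norm \<xi> powr (3 - 2 * eps0)"
    unfolding exponents powr_minus_divide by (simp add: powr_divide)
  finally show "(\<integral>\<^sup>+\<eta>. ennreal (kernel \<xi> \<eta>) \<partial>N) \<le> ennreal (K * (C0 * 4 powr (2*a - 1)) / norm \<xi> powr (3 - 2 * eps0))"
    by (simp add: mult.assoc)
qed

section \<open>Spherical caps\<close>

lemma one_minus_cos_le: "2 * (1 - cos t) \<le> (t::real)\<^sup>2"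
proof -
  have "2 * (1 - cos t) = 4 * (sin (t/2))\<^sup>2"
    using cos_double_sin[of "t/2"] by simp
  also have "\<dots> \<le> 4 * (t/2)\<^sup>2"
    using abs_sin_x_le_abs_x[of "t/2"] abs_le_square_iff by (metis mult_left_mono zero_le_numeral)
  finally show ?thesis
    by (simp add: power_divide)
qed

lemma sin_ge_third: assumes "0 \<le> (x::real)" "x \<le> 2" shows "x / 3 \<le> sin x"
proof -
  have "\<bar>sin x - (\<Sum>m<3. sin_coeff m * x ^ m)\<bar> \<le> inverse (fact 3) * \<bar>x\<bar> ^ 3"
    by (rule Maclaurin_sin_bound)
  moreover have "(\<Sum>m<3. sin_coeff m * x ^ m) = x"
    by (simp add: sin_coeff_def numeral_3_eq_3 lessThan_Suc)
  moreover have "(fact 3 :: real) = 6"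
    by (simp add: numeral_3_eq_3)
  moreover have "\<bar>x\<bar> ^ 3 = x^3" "inverse 6 * x^3 = x^3 / 6"
    using assms by simp_all
  ultimately have "\<bar>sin x - x\<bar> \<le> x^3 / 6"
    by simp
  then have "x - x^3 / 6 \<le> sin x"
    using abs_ge_minus_self[of "sin x - x"] by linarith
  moreover have "x^3 \<le> 4 * x"
  proof -
    have "x\<^sup>2 \<le> 2\<^sup>2"
      using assms by (intro power_mono) auto
    then have "x * x\<^sup>2 \<le> x * 4"
      using assms by (intro mult_left_mono) auto
    then show ?thesis
      by (simp add: power3_eq_cube power2_eq_square mult_ac)
  qed
  ultimately show ?thesis
    by linarith
qed

lemma sq_le_one_minus_cos: assumes "\<bar>t::real\<bar> \<le> pi" shows "t\<^sup>2 \<le> 18 * (1 - cos t)"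
proof -
  have "\<bar>t\<bar> / 2 / 3 \<le> sin (\<bar>t\<bar> / 2)"
    using assms pi_less_4 by (intro sin_ge_third) auto
  also have "sin (\<bar>t\<bar> / 2) = \<bar>sin (t / 2)\<bar>"
  proof (cases "0 \<le> t")
    case True
    then show ?thesis
      using assms by (simp add: sin_ge_zero)
  next
    case False
    have "0 \<le> sin (- t / 2)"
      using assms False by (intro sin_ge_zero) auto
    then show ?thesis
      using False by simp
  qed
  finally have "(\<bar>t\<bar> / 6)\<^sup>2 \<le> \<bar>sin (t / 2)\<bar>\<^sup>2"
    by (intro power_mono) auto
  then show ?thesis
    using cos_double_sin[of "t/2"] by (simp add: power_divide)
qed

lemma norm_sph [simp]: "norm (sph \<theta> \<phi>) = 1"
proof -
  have "(norm (sph \<theta> \<phi>))\<^sup>2 = (sin \<theta> * cos \<phi>)\<^sup>2 + (sin \<theta> * sin \<phi>)\<^sup>2 + (cos \<theta>)\<^sup>2"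
    unfolding power2_norm_eq_inner inner_vec_def sph_def by (simp add: sum_3 power2_eq_square)
  also have "\<dots> = (sin \<theta>)\<^sup>2 * ((cos \<phi>)\<^sup>2 + (sin \<phi>)\<^sup>2) + (cos \<theta>)\<^sup>2"
    by (simp only: power_mult_distrib distrib_left)
  also have "\<dots> = 1"
    by simp
  finally show ?thesis
    using norm_ge_zero[of "sph \<theta> \<phi>"] by (auto simp: power2_eq_1_iff)
qed

lemma dist_sph_sq:
  "(dist (sph \<theta> \<phi>) (sph \<theta>' \<phi>'))\<^sup>2 = 2 * (1 - cos (\<theta> - \<theta>')) + 2 * sin \<theta> * sin \<theta>' * (1 - cos (\<phi> - \<phi>'))"
proof -
  have "(dist (sph \<theta> \<phi>) (sph \<theta>' \<phi>'))\<^sup>2 = 1 + 1 - 2 * (sph \<theta> \<phi> \<bullet> sph \<theta>' \<phi>')"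
    unfolding dist_norm power2_norm_eq_inner inner_diff_left inner_diff_right
    by (simp add: inner_commute power2_norm_eq_inner[symmetric])
  also have "sph \<theta> \<phi> \<bullet> sph \<theta>' \<phi>'
      = sin \<theta> * cos \<phi> * (sin \<theta>' * cos \<phi>') + sin \<theta> * sin \<phi> * (sin \<theta>' * sin \<phi>') + cos \<theta> * cos \<theta>'"
    unfolding inner_vec_def sph_def by (simp add: sum_3)
  finally show ?thesis
    unfolding cos_diff by algebra
qed

lemma sph_eq_axis: "sph \<theta> \<phi> = (sin \<theta> * cos \<phi>) *\<^sub>R axis 1 1 + (sin \<theta> * sin \<phi>) *\<^sub>R axis 2 1 + cos \<theta> *\<^sub>R axis 3 1"
  unfolding sph_def by (simp add: vec_eq_iff forall_3 axis_def)

lemma sph_measurable [measurable]: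
  assumes [measurable]: "f \<in> borel_measurable M" "g \<in> borel_measurable M"
  shows "(\<lambda>x. sph (f x) (g x)) \<in> borel_measurable M"
  unfolding sph_eq_axis by measurable

lemma theta_diff_le_dist_sph:
  assumes "\<theta> \<in> {0..pi}" "\<theta>' \<in> {0..pi}"
  shows "(\<theta> - \<theta>')\<^sup>2 \<le> 9 * (dist (sph \<theta> \<phi>) (sph \<theta>' \<phi>'))\<^sup>2"
proof -
  have "(\<theta> - \<theta>')\<^sup>2 \<le> 18 * (1 - cos (\<theta> - \<theta>'))"
    using assms by (intro sq_le_one_minus_cos) auto
  moreover have "0 \<le> 2 * sin \<theta> * sin \<theta>' * (1 - cos (\<phi> - \<phi>'))"
    using assms by (intro mult_nonneg_nonneg sin_ge_zero) auto
  ultimately show ?thesis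
    unfolding dist_sph_sq by (smt (verit))
qed

lemma dist_sph_same_phi: "dist (sph \<theta> \<phi>) (sph \<theta>' \<phi>) \<le> \<bar>\<theta> - \<theta>'\<bar>"
proof (rule power2_le_imp_le)
  show "(dist (sph \<theta> \<phi>) (sph \<theta>' \<phi>))\<^sup>2 \<le> \<bar>\<theta> - \<theta>'\<bar>\<^sup>2"
    unfolding dist_sph_sq using one_minus_cos_le[of "\<theta> - \<theta>'"] by simp
qed simp

lemma dist_sph_same_theta: "(dist (sph \<theta> \<phi>) (sph \<theta> \<phi>'))\<^sup>2 = 2 * (sin \<theta>)\<^sup>2 * (1 - cos (\<phi> - \<phi>'))"
  using dist_sph_sq[of \<theta> \<phi> \<theta> \<phi>'] by (simp add: power2_eq_square)

lemma one_minus_cos_less_cases: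
  fixes y w :: real
  assumes y: "\<bar>y\<bar> \<le> 2*pi" and close: "18 * (1 - cos y) < w\<^sup>2" and w: "0 < w"
  shows "\<bar>y\<bar> < w \<or> \<bar>y - 2*pi\<bar> < w \<or> \<bar>y + 2*pi\<bar> < w"
proof -
  have small: "\<bar>z\<bar> < w" if "\<bar>z\<bar> \<le> pi" "cos z = cos y" for z
  proof -
    have "\<bar>z\<bar>\<^sup>2 < w\<^sup>2"
      using sq_le_one_minus_cos[OF that(1)] that(2) close by simp
    then show ?thesis
      using w by (simp add: power2_less_imp_less)
  qed
  have "cos (y - 2*pi) = cos y" "cos (y + 2*pi) = cos y"
    by (simp_all add: cos_diff cos_add)
  moreover consider "\<bar>y\<bar> \<le> pi" | "\<bar>y - 2*pi\<bar> \<le> pi" | "\<bar>y + 2*pi\<bar> \<le> pi"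
    using y by linarith
  ultimately show ?thesis
    using small by metis
qed

lemma emeasure_one_minus_cos_less_le:
  assumes \<phi>': "\<phi>' \<in> {0..2*pi}" and w: "0 < w"
  shows "emeasure lborel {\<phi> \<in> {0..2*pi}. 18 * (1 - cos (\<phi> - \<phi>')) < w\<^sup>2} \<le> ennreal (6 * w)"
proof -
  let ?I = "\<lambda>c. {c - w<..<c + w}"
  have "{\<phi> \<in> {0..2*pi}. 18 * (1 - cos (\<phi> - \<phi>')) < w\<^sup>2} \<subseteq> ?I \<phi>' \<union> ?I (\<phi>' + 2*pi) \<union> ?I (\<phi>' - 2*pi)"
  proof
    fix \<phi> assume "\<phi> \<in> {\<phi> \<in> {0..2*pi}. 18 * (1 - cos (\<phi> - \<phi>')) < w\<^sup>2}"
    then have "\<bar>\<phi> - \<phi>'\<bar> < w \<or> \<bar>\<phi> - \<phi>' - 2*pi\<bar> < w \<or> \<bar>\<phi> - \<phi>' + 2*pi\<bar> < w"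
      using \<phi>' w by (intro one_minus_cos_less_cases) auto
    then show "\<phi> \<in> ?I \<phi>' \<union> ?I (\<phi>' + 2*pi) \<union> ?I (\<phi>' - 2*pi)"
      by (auto simp: abs_less_iff)
  qed
  then have "emeasure lborel {\<phi> \<in> {0..2*pi}. 18 * (1 - cos (\<phi> - \<phi>')) < w\<^sup>2}
      \<le> emeasure lborel (?I \<phi>' \<union> ?I (\<phi>' + 2*pi) \<union> ?I (\<phi>' - 2*pi))"
    by (intro emeasure_mono) auto
  also have "\<dots> \<le> emeasure lborel (?I \<phi>') + emeasure lborel (?I (\<phi>' + 2*pi)) + emeasure lborel (?I (\<phi>' - 2*pi))"
    by (intro order_trans[OF emeasure_subadditive] add_mono emeasure_subadditive) auto
  also have "\<dots> = ennreal (6 * w)"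
    using w by (simp add: ennreal_plus[symmetric] del: ennreal_plus)
  finally show ?thesis .
qed

text \<open>By the triangle inequality through \<open>sph \<theta> \<phi>'\<close>, the admissible \<open>\<phi>\<close> keep \<open>sph \<theta> \<phi>\<close> within
  \<open>4 \<delta>\<close> of \<open>sph \<theta> \<phi>'\<close> on the circle of latitude \<open>\<theta>\<close>, an arc of length \<open>O(\<delta> / sin \<theta>)\<close>;
  the weight \<open>sin \<theta>\<close> cancels the blow-up near the poles.\<close>

lemma sin_mult_emeasure_sph_ball_bounded:
  assumes \<phi>': "\<phi>' \<in> {0..2*pi}" and \<delta>: "0 < \<delta>" and near: "\<bar>\<theta> - \<theta>'\<bar> \<le> 3*\<delta>" and sin_pos: "0 < sin \<theta>"
  shows "ennreal (sin \<theta>) * emeasure lborel {\<phi> \<in> {0..2*pi}. dist (sph \<theta> \<phi>) (sph \<theta>' \<phi>') < \<delta>}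
    \<le> ennreal (72 * \<delta>)"
proof -
  define w where "w = 12 * \<delta> / sin \<theta>"
  have w: "0 < w"
    using sin_pos \<delta> by (simp add: w_def)
  have "{\<phi> \<in> {0..2*pi}. dist (sph \<theta> \<phi>) (sph \<theta>' \<phi>') < \<delta>} \<subseteq> {\<phi> \<in> {0..2*pi}. 18 * (1 - cos (\<phi> - \<phi>')) < w\<^sup>2}"
  proof safe
    fix \<phi> assume "dist (sph \<theta> \<phi>) (sph \<theta>' \<phi>') < \<delta>"
    then have "dist (sph \<theta> \<phi>) (sph \<theta> \<phi>') < 4 * \<delta>"
      using dist_triangle[of "sph \<theta> \<phi>" "sph \<theta> \<phi>'" "sph \<theta>' \<phi>'"] dist_sph_same_phi[of \<theta>' \<phi>' \<theta>] near
      by (simp add: dist_commute abs_minus_commute)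
    then have "2 * (sin \<theta>)\<^sup>2 * (1 - cos (\<phi> - \<phi>')) < (4 * \<delta>)\<^sup>2"
      unfolding dist_sph_same_theta[symmetric] by (intro power_strict_mono) auto
    then show "18 * (1 - cos (\<phi> - \<phi>')) < w\<^sup>2"
      using sin_pos by (simp add: w_def power_divide field_simps)
  qed
  then have "emeasure lborel {\<phi> \<in> {0..2*pi}. dist (sph \<theta> \<phi>) (sph \<theta>' \<phi>') < \<delta>}
      \<le> emeasure lborel {\<phi> \<in> {0..2*pi}. 18 * (1 - cos (\<phi> - \<phi>')) < w\<^sup>2}"
    by (rule emeasure_mono) measurable
  also have "\<dots> \<le> ennreal (6 * w)"
    by (rule emeasure_one_minus_cos_less_le[OF \<phi>' w])
  finally have "ennreal (sin \<theta>) * emeasure lborel {\<phi> \<in> {0..2*pi}. dist (sph \<theta> \<phi>) (sph \<theta>' \<phi>') < \<delta>}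
      \<le> ennreal (sin \<theta> * (6 * w))"
    using sin_pos w by (simp add: ennreal_mult mult_left_mono)
  also have "sin \<theta> * (6 * w) = 72 * \<delta>"
    using sin_pos by (simp add: w_def)
  finally show ?thesis .
qed

lemma sin_mult_emeasure_sph_ball_le:
  assumes \<theta>: "\<theta> \<in> {0..pi}" and \<theta>': "\<theta>' \<in> {0..pi}" and \<phi>': "\<phi>' \<in> {0..2*pi}" and \<delta>: "0 < \<delta>"
  shows "ennreal (sin \<theta>) * emeasure lborel {\<phi> \<in> {0..2*pi}. dist (sph \<theta> \<phi>) (sph \<theta>' \<phi>') < \<delta>}
    \<le> ennreal (72 * \<delta>) * indicator {\<theta>' - 3*\<delta>..\<theta>' + 3*\<delta>} \<theta>"
proof -
  consider "3*\<delta> < \<bar>\<theta> - \<theta>'\<bar>" | "sin \<theta> = 0" | "\<bar>\<theta> - \<theta>'\<bar> \<le> 3*\<delta>" "0 < sin \<theta>"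
    using \<theta> sin_ge_zero[of \<theta>] by fastforce
  then show ?thesis
  proof cases
    case 1
    have "(3*\<delta>)\<^sup>2 < \<bar>\<theta> - \<theta>'\<bar>\<^sup>2"
      using 1 \<delta> by (intro power_strict_mono) auto
    then have "\<delta>\<^sup>2 < (dist (sph \<theta> \<phi>) (sph \<theta>' \<phi>'))\<^sup>2" for \<phi>
      using theta_diff_le_dist_sph[OF \<theta> \<theta>', of \<phi> \<phi>'] by (simp add: power_mult_distrib)
    then have empty: "{\<phi> \<in> {0..2*pi}. dist (sph \<theta> \<phi>) (sph \<theta>' \<phi>') < \<delta>} = {}"
      using \<delta> by (auto simp: power2_less_imp_less less_le_not_le dest: power2_less_imp_less)
    show ?thesis
      unfolding empty by simp
  next
    case 2
    then show ?thesis
      by simp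
  next
    case 3
    then have "ennreal (sin \<theta>) * emeasure lborel {\<phi> \<in> {0..2*pi}. dist (sph \<theta> \<phi>) (sph \<theta>' \<phi>') < \<delta>}
        \<le> ennreal (72 * \<delta>)"
      by (intro sin_mult_emeasure_sph_ball_bounded[OF \<phi>' \<delta>])
    moreover have "\<theta> \<in> {\<theta>' - 3*\<delta>..\<theta>' + 3*\<delta>}"
      using 3(1) by (simp add: abs_le_iff)
    ultimately show ?thesis
      by simp
  qed
qed

lemma nn_integral_sph_ball_le:
  assumes \<theta>': "\<theta>' \<in> {0..pi}" and \<phi>': "\<phi>' \<in> {0..2*pi}" and \<delta>: "0 < \<delta>"
  shows "(\<integral>\<^sup>+x. ennreal (sin (fst x)) * indicator ({0..pi} \<times> {0..2*pi}) x
      * indicator {x. dist (sph (fst x) (snd x)) (sph \<theta>' \<phi>') < \<delta>} x \<partial>lborel) \<le> ennreal (432 * \<delta>\<^sup>2)"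
proof -
  define F where "F \<theta> \<phi> = ennreal (sin \<theta>) * indicator {0..pi} \<theta>
      * indicator {\<phi> \<in> {0..2*pi}. dist (sph \<theta> \<phi>) (sph \<theta>' \<phi>') < \<delta>} \<phi>" for \<theta> \<phi>
  have F_measurable: "(\<lambda>x. F (fst x) (snd x)) \<in> borel_measurable (lborel \<Otimes>\<^sub>M lborel)"
    unfolding F_def by measurable
  have "(\<integral>\<^sup>+x. ennreal (sin (fst x)) * indicator ({0..pi} \<times> {0..2*pi}) x
      * indicator {x. dist (sph (fst x) (snd x)) (sph \<theta>' \<phi>') < \<delta>} x \<partial>lborel)
      = (\<integral>\<^sup>+x. F (fst x) (snd x) \<partial>(lborel \<Otimes>\<^sub>M lborel))"
    unfolding lborel_prod by (intro nn_integral_cong) (auto simp: F_def mem_Times_iff split: split_indicator)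
  also have "\<dots> = (\<integral>\<^sup>+\<theta>. (\<integral>\<^sup>+\<phi>. F \<theta> \<phi> \<partial>lborel) \<partial>lborel)"
    using lborel.nn_integral_fst[OF F_measurable] by simp
  also have "\<dots> = (\<integral>\<^sup>+\<theta>. ennreal (sin \<theta>) * indicator {0..pi} \<theta>
      * emeasure lborel {\<phi> \<in> {0..2*pi}. dist (sph \<theta> \<phi>) (sph \<theta>' \<phi>') < \<delta>} \<partial>lborel)"
    unfolding F_def by (intro nn_integral_cong nn_integral_cmult_indicator) measurable
  also have "\<dots> \<le> (\<integral>\<^sup>+\<theta>. ennreal (72 * \<delta>) * indicator {\<theta>' - 3*\<delta>..\<theta>' + 3*\<delta>} \<theta> \<partial>lborel)"
  proof (rule nn_integral_mono)
    fix \<theta> :: real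
    show "ennreal (sin \<theta>) * indicator {0..pi} \<theta> * emeasure lborel {\<phi> \<in> {0..2*pi}. dist (sph \<theta> \<phi>) (sph \<theta>' \<phi>') < \<delta>}
        \<le> ennreal (72 * \<delta>) * indicator {\<theta>' - 3*\<delta>..\<theta>' + 3*\<delta>} \<theta>"
      using sin_mult_emeasure_sph_ball_le[OF _ \<theta>' \<phi>' \<delta>, of \<theta>] by (cases "\<theta> \<in> {0..pi}") auto
  qed
  also have "\<dots> = ennreal (72 * \<delta>) * ennreal (6 * \<delta>)"
    using \<delta> by (simp add: nn_integral_cmult_indicator)
  also have "\<dots> = ennreal (432 * \<delta>\<^sup>2)"
    using \<delta> by (simp add: ennreal_mult[symmetric] power2_eq_square)
  finally show ?thesis .
qed

section \<open>Planes and spheres\<close>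

definition plane_measure :: "real^3 \<Rightarrow> real^3 \<Rightarrow> real^3 \<Rightarrow> (real^3) measure" where
  "plane_measure a u v = distr (lborel :: (real \<times> real) measure) borel (\<lambda>x. a + fst x *\<^sub>R u + snd x *\<^sub>R v)"

lemma plane_param_measurable [measurable]:
  fixes a u v :: "real^3"
  shows "(\<lambda>x::real \<times> real. a + fst x *\<^sub>R u + snd x *\<^sub>R v) \<in> borel_measurable lborel"
proof -
  have "(\<lambda>x::real \<times> real. a + fst x *\<^sub>R u + snd x *\<^sub>R v) \<in> borel_measurable (lborel \<Otimes>\<^sub>M lborel)"
    by measurable
  then show ?thesis
    by (simp add: lborel_prod)
qed

lemma plane_integral_eq_nn_integral:
  assumes [measurable]: "f \<in> borel_measurable borel"
  shows "plane_integral f a u v = (\<integral>\<^sup>+y. ennreal (f y) \<partial>plane_measure a u v)"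
  unfolding plane_integral_def plane_measure_def by (subst nn_integral_distr) simp_all

lemma upper_regular_plane_measure:
  assumes "orthonormal_pair u v"
  shows "upper_regular 2 4 (plane_measure a u v)"
  unfolding upper_regular_def
proof (intro conjI allI impI)
  show "sets (plane_measure a u v) = sets borel"
    by (simp add: plane_measure_def)
  fix p and r :: real assume r: "0 < r"
  have u: "norm u = 1" and v: "norm v = 1" and uv: "u \<bullet> v = 0"
    using assms by (auto simp: orthonormal_pair_def)
  then have inner_uv: "u \<bullet> u = 1" "v \<bullet> v = 1" "v \<bullet> u = 0"
    by (simp_all add: power2_norm_eq_inner[symmetric] inner_commute)
  define s0 t0 where "s0 = (p - a) \<bullet> u" and "t0 = (p - a) \<bullet> v"
  have "(\<lambda>x::real \<times> real. a + fst x *\<^sub>R u + snd x *\<^sub>R v) -` ball p r \<subseteq> {s0 - r<..<s0 + r} \<times> {t0 - r<..<t0 + r}"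
  proof safe
    fix s t :: real
    let ?w = "a + s *\<^sub>R u + t *\<^sub>R v - p"
    assume "a + fst (s, t) *\<^sub>R u + snd (s, t) *\<^sub>R v \<in> ball p r"
    then have w: "norm ?w < r"
      by (simp add: dist_norm norm_minus_commute)
    have "?w \<bullet> u = s - s0" "?w \<bullet> v = t - t0"
      using uv inner_uv by (simp_all add: s0_def t0_def inner_diff_left inner_add_left algebra_simps)
    then have "\<bar>s - s0\<bar> < r" "\<bar>t - t0\<bar> < r"
      using Cauchy_Schwarz_ineq2[of ?w u] Cauchy_Schwarz_ineq2[of ?w v] u v w by auto
    then show "s \<in> {s0 - r<..<s0 + r}" "t \<in> {t0 - r<..<t0 + r}"
      by (auto simp: abs_less_iff)
  qed
  then have "emeasure (plane_measure a u v) (ball p r) \<le> emeasure lborel ({s0 - r<..<s0 + r} \<times> {t0 - r<..<t0 + r})"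
    unfolding plane_measure_def by (subst emeasure_distr) (auto intro!: emeasure_mono borel_open open_Times)
  also have "\<dots> = ennreal (2 * r) * ennreal (2 * r)"
    using r by (simp add: lborel_prod[symmetric] lborel.emeasure_pair_measure_Times)
  also have "\<dots> = ennreal (4 * r powr 2)"
    using r by (simp add: ennreal_mult[symmetric] power2_eq_square)
  finally show "emeasure (plane_measure a u v) (ball p r) \<le> ennreal (4 * r powr 2)" .
qed

definition sphere_measure :: "real^3 \<Rightarrow> real \<Rightarrow> (real^3) measure" where
  "sphere_measure c r = distr
     (density (lborel :: (real \<times> real) measure) (\<lambda>x. ennreal (r\<^sup>2 * sin (fst x)) * indicator ({0..pi} \<times> {0..2*pi}) x))
     borel (\<lambda>x. c + r *\<^sub>R sph (fst x) (snd x))"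

lemma sphere_param_measurable [measurable]:
  fixes c :: "real^3"
  shows "(\<lambda>x::real \<times> real. c + r *\<^sub>R sph (fst x) (snd x)) \<in> borel_measurable lborel"
proof -
  have "(\<lambda>x::real \<times> real. c + r *\<^sub>R sph (fst x) (snd x)) \<in> borel_measurable (lborel \<Otimes>\<^sub>M lborel)"
    by measurable
  then show ?thesis
    by (simp add: lborel_prod)
qed

lemma sphere_weight_measurable [measurable]:
  "(\<lambda>x::real \<times> real. ennreal (r\<^sup>2 * sin (fst x)) * indicator ({0..pi} \<times> {0..2*pi}) x) \<in> borel_measurable lborel"
proof -
  have "(\<lambda>x::real \<times> real. ennreal (r\<^sup>2 * sin (fst x)) * (indicator {0..pi} (fst x) * indicator {0..2*pi} (snd x)))
      \<in> borel_measurable (lborel \<Otimes>\<^sub>M lborel)"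
    by measurable
  then show ?thesis
    by (simp add: lborel_prod indicator_times)
qed

lemma sphere_integral_eq_nn_integral:
  assumes [measurable]: "f \<in> borel_measurable borel" and f: "\<And>y. 0 \<le> f y"
  shows "sphere_integral f c r = (\<integral>\<^sup>+y. ennreal (f y) \<partial>sphere_measure c r)"
proof -
  have "(\<integral>\<^sup>+y. ennreal (f y) \<partial>sphere_measure c r) = (\<integral>\<^sup>+x. ennreal (r\<^sup>2 * sin (fst x)) * indicator ({0..pi} \<times> {0..2*pi}) x
      * ennreal (f (c + r *\<^sub>R sph (fst x) (snd x))) \<partial>lborel)"
    unfolding sphere_measure_def by (simp add: nn_integral_distr nn_integral_density)
  also have "\<dots> = sphere_integral f c r"
    unfolding sphere_integral_def using f
    by (intro nn_integral_cong) (auto simp: sin_ge_zero ennreal_mult' mult_ac split: split_indicator)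
  finally show ?thesis ..
qed

lemma sph_ball_weight_measurable [measurable]:
  "(\<lambda>x::real \<times> real. ennreal (sin (fst x)) * indicator ({0..pi} \<times> {0..2*pi}) x
      * indicator {x. dist (sph (fst x) (snd x)) e < \<delta>} x) \<in> borel_measurable lborel"
proof -
  have "(\<lambda>x::real \<times> real. ennreal (sin (fst x)) * (indicator {0..pi} (fst x) * indicator {0..2*pi} (snd x))
      * indicator {x. dist (sph (fst x) (snd x)) e < \<delta>} x) \<in> borel_measurable (lborel \<Otimes>\<^sub>M lborel)"
    by measurable
  then show ?thesis
    by (simp add: lborel_prod indicator_times)
qed

text \<open>A ball of radius \<open>\<rho>\<close> meeting the sphere at \<open>c + r sph \<theta>' \<phi>'\<close> only sees parameters whose
  image on the unit sphere lies within \<open>2 \<rho> / r\<close> of \<open>sph \<theta>' \<phi>'\<close>.\<close>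

lemma nn_integral_sphere_ball_le:
  fixes c p :: "real^3"
  assumes r: "0 < r" and \<rho>: "0 < \<rho>"
  shows "(\<integral>\<^sup>+x. ennreal (r\<^sup>2) * (ennreal (sin (fst x)) * indicator ({0..pi} \<times> {0..2*pi}) x
      * indicator {x. dist (c + r *\<^sub>R sph (fst x) (snd x)) p < \<rho>} x) \<partial>lborel) \<le> ennreal (1728 * \<rho> powr 2)"
    (is "(\<integral>\<^sup>+x. ennreal (r\<^sup>2) * ?hit x \<partial>lborel) \<le> _")
proof (cases "\<exists>x \<in> {0..pi} \<times> {0..2*pi}. dist (c + r *\<^sub>R sph (fst x) (snd x)) p < \<rho>")
  case False
  then have hit_zero: "?hit x = 0" for x
    by (auto split: split_indicator)
  show ?thesis
    by (simp only: hit_zero) simp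
next
  case True
  then obtain \<theta>' \<phi>' where x': "\<theta>' \<in> {0..pi}" "\<phi>' \<in> {0..2*pi}" "dist (c + r *\<^sub>R sph \<theta>' \<phi>') p < \<rho>"
    by auto
  have hit_le: "?hit x \<le> ennreal (sin (fst x)) * indicator ({0..pi} \<times> {0..2*pi}) x
      * indicator {x. dist (sph (fst x) (snd x)) (sph \<theta>' \<phi>') < 2 * \<rho> / r} x" for x
  proof -
    have "r * dist (sph (fst x) (snd x)) (sph \<theta>' \<phi>') = dist (c + r *\<^sub>R sph (fst x) (snd x)) (c + r *\<^sub>R sph \<theta>' \<phi>')"
      using r by (simp add: dist_norm scaleR_diff_right[symmetric])
    also have "\<dots> < 2 * \<rho>" if "dist (c + r *\<^sub>R sph (fst x) (snd x)) p < \<rho>"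
      using that x'(3) dist_triangle2[of "c + r *\<^sub>R sph (fst x) (snd x)" "c + r *\<^sub>R sph \<theta>' \<phi>'" p]
      by linarith
    finally show ?thesis
      using r by (auto simp: field_simps split: split_indicator)
  qed
  have "(\<integral>\<^sup>+x. ennreal (r\<^sup>2) * ?hit x \<partial>lborel)
      \<le> (\<integral>\<^sup>+x. ennreal (r\<^sup>2) * (ennreal (sin (fst x)) * indicator ({0..pi} \<times> {0..2*pi}) x
        * indicator {x. dist (sph (fst x) (snd x)) (sph \<theta>' \<phi>') < 2 * \<rho> / r} x) \<partial>lborel)"
    by (intro nn_integral_mono mult_left_mono hit_le) simp
  also have "\<dots> = ennreal (r\<^sup>2) * (\<integral>\<^sup>+x. ennreal (sin (fst x)) * indicator ({0..pi} \<times> {0..2*pi}) x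
        * indicator {x. dist (sph (fst x) (snd x)) (sph \<theta>' \<phi>') < 2 * \<rho> / r} x \<partial>lborel)"
    by (rule nn_integral_cmult) measurable
  also have "\<dots> \<le> ennreal (r\<^sup>2) * ennreal (432 * (2 * \<rho> / r)\<^sup>2)"
    using x' r \<rho> by (intro mult_left_mono nn_integral_sph_ball_le) auto
  also have "\<dots> = ennreal (1728 * \<rho> powr 2)"
    using r \<rho> by (simp add: ennreal_mult[symmetric] power_divide field_simps)
  finally show ?thesis .
qed

lemma upper_regular_sphere_measure:
  assumes r: "0 < r"
  shows "upper_regular 2 1728 (sphere_measure c r)"
  unfolding upper_regular_def
proof (intro conjI allI impI)
  show "sets (sphere_measure c r) = sets borel"
    by (simp add: sphere_measure_def)
  fix p and \<rho> :: real assume \<rho>: "0 < \<rho>"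
  define W where "W x = ennreal (r\<^sup>2 * sin (fst x)) * indicator ({0..pi} \<times> {0..2*pi}) x" for x :: "real \<times> real"
  define \<eta> where "\<eta> x = c + r *\<^sub>R sph (fst x) (snd x)" for x :: "real \<times> real"
  have [measurable]: "\<eta> \<in> borel_measurable lborel" "W \<in> borel_measurable lborel"
    unfolding \<eta>_def W_def by measurable
  have "emeasure (sphere_measure c r) (ball p \<rho>) = emeasure (density lborel W) (\<eta> -` ball p \<rho>)"
    unfolding sphere_measure_def W_def[abs_def, symmetric] \<eta>_def[abs_def, symmetric]
    by (subst emeasure_distr) simp_all
  also have "\<dots> = (\<integral>\<^sup>+x. W x * indicator (\<eta> -` ball p \<rho>) x \<partial>lborel)"
    using measurable_sets[of \<eta> lborel borel "ball p \<rho>"] by (intro emeasure_density) simp_all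
  also have "\<dots> = (\<integral>\<^sup>+x. ennreal (r\<^sup>2) * (ennreal (sin (fst x)) * indicator ({0..pi} \<times> {0..2*pi}) x
      * indicator {x. dist (\<eta> x) p < \<rho>} x) \<partial>lborel)"
    by (intro nn_integral_cong)
      (auto simp: W_def ennreal_mult' sin_ge_zero dist_commute split: split_indicator)
  also have "\<dots> \<le> ennreal (1728 * \<rho> powr 2)"
    unfolding \<eta>_def using r \<rho> by (rule nn_integral_sphere_ball_le)
  finally show "emeasure (sphere_measure c r) (ball p \<rho>) \<le> ennreal (1728 * \<rho> powr 2)" .
qed

lemma kernel_measurable [measurable]: "kernel \<xi> \<in> borel_measurable borel"
  unfolding kernel_def[abs_def] by measurable

lemma kernel_nonneg: "0 \<le> kernel \<xi> \<eta>"
  unfolding kernel_def by simp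

theorem lemma2p3:
  shows "\<exists>C::real. \<forall>\<xi>::real^3. \<xi> \<noteq> 0 \<longrightarrow>
           (\<forall>a u v. orthonormal_pair u v \<longrightarrow>
              plane_integral (kernel \<xi>) a u v \<le> ennreal (C / norm \<xi> powr (3 - 2 * eps0))) \<and>
           (\<forall>c r. r > 0 \<longrightarrow>
              sphere_integral (kernel \<xi>) c r \<le> ennreal (C / norm \<xi> powr (3 - 2 * eps0)))"
proof -
  obtain C where C: "\<And>K (N :: (real^3) measure) \<xi>. upper_regular 2 K N \<Longrightarrow> 0 \<le> K \<Longrightarrow> \<xi> \<noteq> 0 \<Longrightarrow>
      (\<integral>\<^sup>+\<eta>. ennreal (kernel \<xi> \<eta>) \<partial>N) \<le> ennreal (K * C / norm \<xi> powr (3 - 2 * eps0))"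
    using kernel_integral_bound by blast
  show ?thesis
  proof (intro exI[of _ "1728 * C"] allI impI conjI)
    fix \<xi> :: "real^3" and a u v :: "real^3"
    assume \<xi>: "\<xi> \<noteq> 0" and uv: "orthonormal_pair u v"
    have "upper_regular 2 1728 (plane_measure a u v)"
      using upper_regular_plane_measure[OF uv] by (rule upper_regular_mono) simp
    then show "plane_integral (kernel \<xi>) a u v \<le> ennreal (1728 * C / norm \<xi> powr (3 - 2 * eps0))"
      using C[OF _ _ \<xi>] by (simp add: plane_integral_eq_nn_integral)
  next
    fix \<xi> c :: "real^3" and r :: real
    assume \<xi>: "\<xi> \<noteq> 0" and r: "r > 0"
    show "sphere_integral (kernel \<xi>) c r \<le> ennreal (1728 * C / norm \<xi> powr (3 - 2 * eps0))"
      using C[OF upper_regular_sphere_measure[OF r] _ \<xi>]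
      by (simp add: sphere_integral_eq_nn_integral kernel_nonneg)
  qed
qed

end
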